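(* Let $c\geq 1$ be an integer. For every integer $n\geq 1$, $$ \bar a_c(n) \equiv \begin{cases} 2 \pmod{4} & \text{if } n = k^2 \text{ for some integer } k, \\ 2(c+1) \pmod{4} & \text{if } n = 2k^2 \text{ for some integer } k, \\ 0 \pmod 4 & \text{otherwise}. \end{cases} $$
   Context: For $|q|<1$ and integers $m\geq 1$, write $f_m:=\prod_{j\geq 1}(1-q^{jm})$. For an integer $c\geq 1$, the generalized overcubic partition function $\bar a_c(n)$ is defined by $$\sum_{n\geq 0}\bar a_c(n)q^n=\frac{f_4^{c-1}}{f_1^2f_2^{2c-3}}.$$ Combinatorially, $\bar a_c(n)$ counts overpartitions of $n$ (partitions in which the first occurrence of each part size may be overlined) in which each even part may appear in $c$ different colors (the overlining rule being applied to each colored part size separately), while odd parts have only one color. *)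

theory Defs
  imports "HOL-Computational_Algebra.Formal_Power_Series"
begin

text \<open>f_m = prod_{j>=1} (1 - q^(jm)) as a formal power series over the rationals.
  The n-th coefficient of the infinite product equals the n-th coefficient of the
  finite product over 1 <= j <= n (all further factors are 1 mod q^(n+1)).\<close>
definition eulerf :: "nat \<Rightarrow> rat fps" where
  "eulerf m = Abs_fps (\<lambda>k. fps_nth (\<Prod>j\<in>{1..k}. (1 - fps_X ^ (j * m))) k)"

text \<open>Generating function f_4^(c-1) / (f_1^2 f_2^(2c-3)), written as
  f_4^(c-1) f_2^3 / (f_1^2 f_2^(2c)) so that the exponent is natural also for c = 1.\<close>
definition overcubic_gf :: "nat \<Rightarrow> rat fps" where
  "overcubic_gf c = eulerf 4 ^ (c - 1) * eulerf 2 ^ 3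
      * inverse (eulerf 1 ^ 2 * eulerf 2 ^ (2 * c))"

definition abar :: "nat \<Rightarrow> nat \<Rightarrow> rat" where
  "abar c n = fps_nth (overcubic_gf c) n"

end

theory Submission
  imports Defs
begin

text \<open>For a \<ge> 1 let u_a = q^a / (1 - q^a) (\<open>multiples_fps a\<close>), so that
  (1 - q^a)^2 (1 + 2 u_a) = 1 - q^(2a). Multiplying over a = m, 2m, 3m, ... and using
  (1 + 2x)(1 + 2y) \<equiv> 1 + 2(x + y) (mod 4) gives f_m^2 (1 + 2 \<Sum>_j u_(jm)) \<equiv> f_(2m) (mod 4).
  The coefficient of q^k in \<Sum>_j u_(jm) is the number of divisors of k/m, which is odd exactly
  when k/m is a square; hence f_m^2 (1 + 2 \<theta>_m) \<equiv> f_(2m) (mod 4), where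
  \<theta>_m = \<Sum>_(j \<ge> 1) q^(m j^2) (\<open>squares_fps m\<close>). Using this for m = 1 and m = 2 gives
  f_1^2 f_2^(2c) (1 + 2 \<theta>_1 + 2(c - 1) \<theta>_2) \<equiv> f_2^3 f_4^(c - 1) (mod 4), so the generating
  function is congruent to 1 + 2 \<theta>_1 + 2(c - 1) \<theta>_2 modulo 4.\<close>

unbundle fps_syntax

definition fps_integral :: "'a::ring_1 fps \<Rightarrow> bool" where
  "fps_integral f \<longleftrightarrow> (\<forall>k. f $ k \<in> \<int>)"

definition int_multiple :: "int \<Rightarrow> 'a::ring_1 \<Rightarrow> bool" where
  "int_multiple M x \<longleftrightarrow> (\<exists>t\<in>\<int>. x = of_int M * t)"

text \<open>Congruence modulo the ideal generated by M and X^(N+1); for M = 0 it says that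
  the coefficients up to N agree.\<close>
definition fps_cong :: "int \<Rightarrow> nat \<Rightarrow> 'a::comm_ring_1 fps \<Rightarrow> 'a fps \<Rightarrow> bool" where
  "fps_cong M N f g \<longleftrightarrow> (\<forall>k\<le>N. int_multiple M (f $ k - g $ k))"

lemma int_multiple_0 [simp]: "int_multiple M 0"
  unfolding int_multiple_def by (rule bexI[of _ 0]) auto

lemma int_multiple_add: "int_multiple M x \<Longrightarrow> int_multiple M y \<Longrightarrow> int_multiple M (x + y)"
  unfolding int_multiple_def by (metis Ints_add distrib_left)

lemma int_multiple_minus: "int_multiple M x \<Longrightarrow> int_multiple M (- x)"
  unfolding int_multiple_def by (auto intro!: bexI[where x="- _"])

lemma int_multiple_mult_Ints: "int_multiple M x \<Longrightarrow> z \<in> \<int> \<Longrightarrow> int_multiple M (x * z)"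
  unfolding int_multiple_def by (auto simp: mult.assoc intro!: bexI[where x="_ * _"])

lemma int_multiple_sum: "(\<And>i. i \<in> A \<Longrightarrow> int_multiple M (f i)) \<Longrightarrow> int_multiple M (sum f A)"
  by (induction A rule: infinite_finite_induct) (auto intro: int_multiple_add)

lemma int_multiple_0_iff: "int_multiple 0 x \<longleftrightarrow> x = 0"
  unfolding int_multiple_def by auto

lemma int_multiple_4_double:
  assumes "odd c \<longleftrightarrow> b"
  shows "int_multiple 4 (2 * (of_nat c - of_bool b) :: 'a::ring_1)"
proof -
  have "even (int c - of_bool b)"
    using assms by (cases b) auto
  then obtain t where t: "int c - of_bool b = 2 * t" ..
  have "2 * (of_nat c - of_bool b) = (of_int (2 * (int c - of_bool b)) :: 'a)"
    by simp
  also have "\<dots> = of_int 4 * of_int t"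
    unfolding t by simp
  finally show ?thesis
    unfolding int_multiple_def by (intro bexI[of _ "of_int t"]) auto
qed

lemma fps_integral_one [simp]: "fps_integral 1"
  and fps_integral_X_power [simp]: "fps_integral (fps_X ^ k)"
  and fps_integral_numeral [simp]: "fps_integral (numeral a)"
  and fps_integral_of_nat [simp]: "fps_integral (of_nat n)"
  unfolding fps_integral_def
  by (auto simp: fps_one_nth numeral_fps_const simp flip: fps_of_nat)

lemma fps_integral_add: "fps_integral f \<Longrightarrow> fps_integral g \<Longrightarrow> fps_integral (f + g)"
  and fps_integral_diff: "fps_integral f \<Longrightarrow> fps_integral g \<Longrightarrow> fps_integral (f - g)"
  and fps_integral_mult: "fps_integral f \<Longrightarrow> fps_integral g \<Longrightarrow> fps_integral (f * g)"
  unfolding fps_integral_def fps_mult_nth by auto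

lemma fps_integral_power: "fps_integral f \<Longrightarrow> fps_integral (f ^ e)"
  by (induction e) (auto intro: fps_integral_mult)

lemma fps_integral_sum: "(\<And>i. i \<in> A \<Longrightarrow> fps_integral (f i)) \<Longrightarrow> fps_integral (sum f A)"
  by (induction A rule: infinite_finite_induct) (auto simp: fps_integral_def)

lemma fps_integral_prod: "(\<And>i. i \<in> A \<Longrightarrow> fps_integral (f i)) \<Longrightarrow> fps_integral (prod f A)"
  by (induction A rule: infinite_finite_induct) (auto intro: fps_integral_mult)

lemmas fps_integral_intros =
  fps_integral_add fps_integral_diff fps_integral_mult fps_integral_power
  fps_integral_sum fps_integral_prod

lemma fps_integral_inverse:
  fixes f :: "'a::division_ring fps"
  assumes "fps_integral f" "f $ 0 = 1"
  shows "fps_integral (inverse f)"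
proof -
  have "inverse f $ k \<in> \<int>" for k
  proof (induction k rule: less_induct)
    case (less k)
    show ?case
    proof (cases k)
      case (Suc j)
      have "0 = (f * inverse f) $ k"
        using inverse_mult_eq_1'[of f] assms(2) Suc by simp
      also have "\<dots> = inverse f $ k + (\<Sum>i=1..k. f $ i * inverse f $ (k - i))"
        using assms(2) Suc by (simp add: fps_mult_nth sum.atLeast_Suc_atMost)
      finally have "inverse f $ k = - (\<Sum>i=1..k. f $ i * inverse f $ (k - i))"
        by (simp add: eq_neg_iff_add_eq_0)
      also have "\<dots> \<in> \<int>"
        using less assms(1) unfolding fps_integral_def
        by (intro Ints_minus Ints_sum Ints_mult) auto
      finally show ?thesis .
    qed (use assms in simp)
  qed
  then show ?thesis
    unfolding fps_integral_def by auto
qed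

lemma fps_cong_refl [simp]: "fps_cong M N f f"
  unfolding fps_cong_def by simp

lemma fps_cong_sym: "fps_cong M N f g \<Longrightarrow> fps_cong M N g f"
  unfolding fps_cong_def by (metis int_multiple_minus minus_diff_eq)

lemma fps_cong_trans [trans]: "fps_cong M N f g \<Longrightarrow> fps_cong M N g h \<Longrightarrow> fps_cong M N f h"
  unfolding fps_cong_def using int_multiple_add by fastforce

lemma fps_cong_mod_0: "fps_cong 0 N f g \<Longrightarrow> fps_cong M N f g"
  unfolding fps_cong_def by (simp add: int_multiple_0_iff)

lemma fps_cong_mult_right:
  assumes "fps_cong M N f g" "fps_integral h"
  shows "fps_cong M N (f * h) (g * h)"
  unfolding fps_cong_def
proof (intro allI impI)
  fix k assume "k \<le> N"
  have "(f * h) $ k - (g * h) $ k = (\<Sum>i=0..k. (f $ i - g $ i) * h $ (k - i))"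
    by (simp add: fps_mult_nth sum_subtractf algebra_simps)
  also have "int_multiple M \<dots>"
    using assms \<open>k \<le> N\<close> unfolding fps_cong_def fps_integral_def
    by (auto intro!: int_multiple_sum int_multiple_mult_Ints)
  finally show "int_multiple M ((f * h) $ k - (g * h) $ k)" .
qed

lemma fps_cong_mult_left: "fps_cong M N f g \<Longrightarrow> fps_integral h \<Longrightarrow> fps_cong M N (h * f) (h * g)"
  using fps_cong_mult_right by (metis mult.commute)

lemma fps_cong_mult:
  "fps_cong M N f g \<Longrightarrow> fps_cong M N f' g' \<Longrightarrow> fps_integral g \<Longrightarrow> fps_integral f'
    \<Longrightarrow> fps_cong M N (f * f') (g * g')"
  by (meson fps_cong_mult_left fps_cong_mult_right fps_cong_trans)

lemma fps_cong_prod: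
  assumes "\<And>i. i \<in> A \<Longrightarrow> fps_cong M N (f i) (g i)"
    and "\<And>i. i \<in> A \<Longrightarrow> fps_integral (f i)" "\<And>i. i \<in> A \<Longrightarrow> fps_integral (g i)"
  shows "fps_cong M N (prod f A) (prod g A)"
  using assms
proof (induction A rule: infinite_finite_induct)
  case (insert x F)
  then show ?case
    unfolding prod.insert[OF insert(1,2)] by (intro fps_cong_mult fps_integral_prod) auto
qed simp_all

lemma fps_cong_power:
  "fps_cong M N f g \<Longrightarrow> fps_integral f \<Longrightarrow> fps_integral g \<Longrightarrow> fps_cong M N (f ^ e) (g ^ e)"
  using fps_cong_prod[of "{..<e}" M N "\<lambda>_. f" "\<lambda>_. g"] by simp

lemma fps_cong_4I: "f = g + 4 * W \<Longrightarrow> fps_integral W \<Longrightarrow> fps_cong 4 N f g"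
  unfolding fps_cong_def fps_integral_def int_multiple_def
  by (auto simp: numeral_fps_const)

lemma fps_cong_4_mult_one_plus_2:
  fixes a b :: "'a::comm_ring_1 fps"
  assumes "fps_integral a" "fps_integral b"
  shows "fps_cong 4 N ((1 + 2 * a) * (1 + 2 * b)) (1 + 2 * (a + b))"
proof (rule fps_cong_4I)
  show "(1 + 2 * a) * (1 + 2 * b) = 1 + 2 * (a + b) + 4 * (a * b)"
    by (simp add: algebra_simps)
qed (use assms in \<open>intro fps_integral_mult\<close>)

lemma fps_cong_4_prod_one_plus_2:
  assumes "finite A" "\<And>i. i \<in> A \<Longrightarrow> fps_integral (v i)"
  shows "fps_cong 4 N (\<Prod>i\<in>A. 1 + 2 * v i) (1 + 2 * (\<Sum>i\<in>A. v i))"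
  using assms
proof (induction A rule: finite_induct)
  case (insert x F)
  have "fps_cong 4 N ((1 + 2 * v x) * (\<Prod>i\<in>F. 1 + 2 * v i)) ((1 + 2 * v x) * (1 + 2 * (\<Sum>i\<in>F. v i)))"
    using insert by (intro fps_cong_mult_left) (auto intro!: fps_integral_intros)
  also have "fps_cong 4 N \<dots> (1 + 2 * (v x + (\<Sum>i\<in>F. v i)))"
    using insert by (intro fps_cong_4_mult_one_plus_2) (auto intro!: fps_integral_intros)
  finally show ?case
    using insert by simp
qed simp

lemma fps_cong_4_power_one_plus_2:
  assumes "fps_integral a"
  shows "fps_cong 4 N ((1 + 2 * a) ^ e) (1 + 2 * of_nat e * a)"
  using fps_cong_4_prod_one_plus_2[of "{..<e}" "\<lambda>_. a" N] assms by (simp add: mult.assoc)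

lemma odd_card_divisors_iff_square:
  fixes k :: nat
  assumes "k > 0"
  shows "odd (card {d. d dvd k}) \<longleftrightarrow> (\<exists>j. k = j^2)"
proof -
  define D where "D = {d. d dvd k}"
  define small where "small = {d \<in> D. d * d < k}"
  define large where "large = {d \<in> D. k < d * d}"
  define root where "root = {d \<in> D. d * d = k}"
  have "finite D"
    unfolding D_def using assms by simp
  have "small \<union> large \<union> root = D"
    unfolding small_def large_def root_def by auto
  moreover have "card (small \<union> large \<union> root) = card small + card large + card root"
    using \<open>finite D\<close> unfolding small_def large_def root_def
    by (subst card_Un_disjoint card_Un_disjoint, auto)+
  ultimately have card_D: "card D = card small + card large + card root"
    by simp
  have swap: "d * d < k \<longleftrightarrow> k < (k div d) * (k div d)" if "d \<in> D" for d
  proof -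
    obtain e where k: "k = d * e"
      using \<open>d \<in> D\<close> unfolding D_def by blast
    then have "d > 0" "e > 0"
      using assms by auto
    then have "d * d < d * e \<longleftrightarrow> d * e < e * e"
      by simp
    then show ?thesis
      using k \<open>d > 0\<close> by simp
  qed
  have div_mem: "k div d \<in> D" if "d \<in> D" for d
    using that unfolding D_def by (auto elim!: dvdE)
  have div_div: "k div (k div d) = d" if "d \<in> D" for d
    using that assms unfolding D_def by (auto simp: div_div_eq_right)
  have "bij_betw (\<lambda>d. k div d) small large"
  proof (rule bij_betwI[where g = "\<lambda>d. k div d"])
    show "(\<lambda>d. k div d) \<in> small \<rightarrow> large"
    proof
      fix d assume "d \<in> small"
      then have "d \<in> D" "d * d < k"
        unfolding small_def by auto
      then show "k div d \<in> large"
        unfolding large_def using swap div_mem by blast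
    qed
    show "(\<lambda>d. k div d) \<in> large \<rightarrow> small"
    proof
      fix d assume "d \<in> large"
      then have "d \<in> D" "k < d * d"
        unfolding large_def by auto
      then show "k div d \<in> small"
        unfolding small_def using swap[OF div_mem[OF \<open>d \<in> D\<close>]] div_div div_mem by simp
    qed
  qed (auto simp: small_def large_def div_div)
  then have "card small = card large"
    by (rule bij_betw_same_card)
  moreover have "card root = of_bool (\<exists>j. k = j^2)"
  proof (cases "\<exists>j. k = j^2")
    case True
    then obtain j where "k = j^2" by blast
    moreover have "d * d = j * j \<longleftrightarrow> d = j" for d
      using power2_eq_iff_nonneg[of d j] by (simp add: power2_eq_square)
    ultimately have "root = {j}"
      unfolding root_def D_def by (auto simp: power2_eq_square)
    then show ?thesis
      using True by simp
  next
    case False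
    then have "root = {}"
      unfolding root_def by (auto simp: power2_eq_square)
    then show ?thesis
      using False by simp
  qed
  ultimately show ?thesis
    using card_D unfolding D_def by simp
qed

lemma odd_card_multiples_dvd_iff:
  fixes k m N :: nat
  assumes "m \<ge> 1" "k \<le> N"
  shows "odd (card {j \<in> {1..N}. 0 < k \<and> j * m dvd k}) \<longleftrightarrow> 0 < k \<and> (\<exists>j. k = m * j^2)"
proof (cases "0 < k \<and> m dvd k")
  case True
  then obtain k' where k: "k = m * k'" and "k' > 0"
    by auto
  have "j * m dvd k \<longleftrightarrow> j dvd k'" for j
    using assms(1) k by (simp add: mult.commute[of j])
  moreover have "j \<le> N" if "j dvd k'" for j
    using dvd_imp_le[OF that \<open>k' > 0\<close>] assms k by (metis le_trans mult_le_mono1 mult_1)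
  moreover have "j \<ge> 1" if "j dvd k'" for j
    using that \<open>k' > 0\<close> by (metis dvd_0_left_iff less_one not_less neq0_conv)
  ultimately have "{j \<in> {1..N}. 0 < k \<and> j * m dvd k} = {d. d dvd k'}"
    using True by auto
  then have "odd (card {j \<in> {1..N}. 0 < k \<and> j * m dvd k}) \<longleftrightarrow> (\<exists>j. k' = j^2)"
    using odd_card_divisors_iff_square[OF \<open>k' > 0\<close>] by simp
  also have "\<dots> \<longleftrightarrow> 0 < k \<and> (\<exists>j. k = m * j^2)"
    using assms(1) True k by simp
  finally show ?thesis .
next
  case False
  then have "{j \<in> {1..N}. 0 < k \<and> j * m dvd k} = {}"
    by (auto intro: dvd_mult_left)
  moreover have "\<not> (0 < k \<and> (\<exists>j. k = m * j^2))"
    using False by auto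
  ultimately show ?thesis
    by (simp only: card.empty) simp
qed

definition multiples_fps :: "nat \<Rightarrow> 'a::zero_neq_one fps" where
  "multiples_fps a = Abs_fps (\<lambda>k. of_bool (0 < k \<and> a dvd k))"

definition squares_fps :: "nat \<Rightarrow> 'a::zero_neq_one fps" where
  "squares_fps m = Abs_fps (\<lambda>k. of_bool (0 < k \<and> (\<exists>j. k = m * j^2)))"

lemma fps_integral_multiples_fps [simp]: "fps_integral (multiples_fps a)"
  and fps_integral_squares_fps [simp]: "fps_integral (squares_fps m)"
  unfolding fps_integral_def multiples_fps_def squares_fps_def by simp_all

lemma one_minus_X_power_mult_multiples_fps:
  assumes "a \<ge> 1"
  shows "(1 - fps_X ^ a) * multiples_fps a = (fps_X ^ a :: 'a::comm_ring_1 fps)"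
proof (rule fps_ext)
  fix k
  have "a dvd k \<longleftrightarrow> a dvd (k - a)" if "a \<le> k"
    using that by (simp add: dvd_minus_self)
  then show "((1 - fps_X ^ a) * multiples_fps a) $ k = (fps_X ^ a :: 'a fps) $ k"
    using assms by (auto simp: algebra_simps fps_X_power_mult_nth multiples_fps_def dest: dvd_imp_le)
qed

lemma one_minus_squared_mult_one_plus_2:
  fixes x v :: "'a::comm_ring_1"
  assumes "(1 - x) * v = x"
  shows "(1 - x)^2 * (1 + 2 * v) = 1 - x^2"
proof -
  have "(1 - x)^2 * (1 + 2 * v) = (1 - x) * (1 - x + 2 * ((1 - x) * v))"
    by (simp add: algebra_simps power2_eq_square)
  also have "\<dots> = 1 - x^2"
    unfolding assms by (simp add: algebra_simps power2_eq_square)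
  finally show ?thesis .
qed

lemma one_minus_X_power_squared_mult:
  assumes "a \<ge> 1"
  shows "(1 - fps_X ^ a)^2 * (1 + 2 * multiples_fps a) = (1 - fps_X ^ (2 * a) :: 'a::comm_ring_1 fps)"
  using one_minus_squared_mult_one_plus_2[OF one_minus_X_power_mult_multiples_fps[OF assms]]
  by (simp add: power_mult mult.commute[of 2 a])

lemma sum_multiples_fps_nth:
  "(\<Sum>j\<in>{1..N}. multiples_fps (j * m)) $ k
    = (of_nat (card {j \<in> {1..N}. 0 < k \<and> j * m dvd k}) :: 'a::comm_ring_1)"
  by (simp add: fps_sum_nth multiples_fps_def of_bool_def flip: sum.inter_filter)

lemma sum_multiples_fps_cong_squares_fps:
  assumes "m \<ge> 1"
  shows "fps_cong 4 N (1 + 2 * (\<Sum>j\<in>{1..N}. multiples_fps (j * m)))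
                      (1 + 2 * squares_fps m :: 'a::comm_ring_1 fps)"
  unfolding fps_cong_def
proof (intro allI impI)
  fix k assume "k \<le> N"
  let ?c = "card {j \<in> {1..N}. 0 < k \<and> j * m dvd k}" and ?b = "0 < k \<and> (\<exists>j. k = m * j^2)"
  have "(1 + 2 * (\<Sum>j\<in>{1..N}. multiples_fps (j * m))) $ k - (1 + 2 * squares_fps m) $ k
      = (2 * (of_nat ?c - of_bool ?b) :: 'a)"
    using sum_multiples_fps_nth[where 'a = 'a and N = N and m = m and k = k]
    by (simp add: squares_fps_def numeral_fps_const algebra_simps)
  moreover have "int_multiple 4 (2 * (of_nat ?c - of_bool ?b) :: 'a)"
    using odd_card_multiples_dvd_iff[OF assms \<open>k \<le> N\<close>] by (rule int_multiple_4_double)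
  ultimately show "int_multiple 4
      ((1 + 2 * (\<Sum>j\<in>{1..N}. multiples_fps (j * m))) $ k - (1 + 2 * squares_fps m :: 'a fps) $ k)"
    by simp
qed

definition euler_partial :: "nat \<Rightarrow> nat \<Rightarrow> 'a::comm_ring_1 fps" where
  "euler_partial N m = (\<Prod>j\<in>{1..N}. 1 - fps_X ^ (j * m))"

lemma fps_integral_euler_partial [simp]: "fps_integral (euler_partial N m)"
  unfolding euler_partial_def by (intro fps_integral_prod fps_integral_diff) auto

lemma euler_partial_double_cong:
  assumes "m \<ge> 1"
  shows "fps_cong 4 N (euler_partial N m ^ 2 * (1 + 2 * squares_fps m)) (euler_partial N (2 * m))"
proof -
  let ?U = "\<Sum>j\<in>{1..N}. multiples_fps (j * m) :: 'a fps"
  have "(euler_partial N (2 * m) :: 'a fps)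
      = (\<Prod>j\<in>{1..N}. (1 - fps_X ^ (j * m))^2 * (1 + 2 * multiples_fps (j * m)))"
    unfolding euler_partial_def
  proof (rule prod.cong[OF refl])
    fix j assume "j \<in> {1..N}"
    then have "j * m \<ge> 1"
      using assms by simp
    then show "1 - fps_X ^ (j * (2 * m))
        = ((1 - fps_X ^ (j * m))^2 * (1 + 2 * multiples_fps (j * m)) :: 'a fps)"
      using one_minus_X_power_squared_mult[where 'a = 'a, of "j * m"]
      by (simp add: mult.left_commute)
  qed
  also have "\<dots> = euler_partial N m ^ 2 * (\<Prod>j\<in>{1..N}. 1 + 2 * multiples_fps (j * m))"
    unfolding euler_partial_def by (simp add: prod.distrib prod_power_distrib)
  finally have factored: "(euler_partial N (2 * m) :: 'a fps)
      = euler_partial N m ^ 2 * (\<Prod>j\<in>{1..N}. 1 + 2 * multiples_fps (j * m))" .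
  have "fps_cong 4 N (euler_partial N (2 * m) :: 'a fps) (euler_partial N m ^ 2 * (1 + 2 * ?U))"
    unfolding factored by (intro fps_cong_mult_left fps_cong_4_prod_one_plus_2 fps_integral_power) simp_all
  also have "fps_cong 4 N \<dots> (euler_partial N m ^ 2 * (1 + 2 * squares_fps m))"
    using assms by (intro fps_cong_mult_left sum_multiples_fps_cong_squares_fps fps_integral_power) auto
  finally show ?thesis
    by (rule fps_cong_sym)
qed

lemma eulerf_nth: "eulerf m $ k = euler_partial k m $ k"
  by (simp add: eulerf_def euler_partial_def)

lemma fps_integral_eulerf [simp]: "fps_integral (eulerf m)"
  using fps_integral_euler_partial unfolding fps_integral_def eulerf_nth by blast

lemma eulerf_cong_euler_partial:
  assumes "m \<ge> 1"
  shows "fps_cong 0 N (eulerf m) (euler_partial N m)"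
  unfolding fps_cong_def int_multiple_0_iff
proof (intro allI impI)
  fix k assume "k \<le> N"
  define tail :: "rat fps" where "tail = (\<Prod>j\<in>{k+1..N}. 1 - fps_X ^ (j * m))"
  have split: "euler_partial N m = euler_partial k m * tail"
    unfolding euler_partial_def tail_def using \<open>k \<le> N\<close>
    by (subst prod.union_disjoint[symmetric]) (auto intro!: prod.cong)
  have "fps_cong 0 k (1 - fps_X ^ (j * m)) (1 :: rat fps)" if "j \<in> {k+1..N}" for j
  proof -
    have "k < j * m"
      using that assms by (auto intro: less_le_trans[of _ j])
    then show ?thesis
      by (simp add: fps_cong_def int_multiple_0_iff)
  qed
  then have "fps_cong 0 k tail (\<Prod>j\<in>{k+1..N}. 1)"
    unfolding tail_def by (intro fps_cong_prod) (auto intro: fps_integral_diff)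
  then have "fps_cong 0 k (euler_partial k m * tail) (euler_partial k m)"
    using fps_cong_mult_left[of 0 k tail 1 "euler_partial k m"] by simp
  then show "eulerf m $ k - euler_partial N m $ k = 0"
    unfolding split fps_cong_def int_multiple_0_iff eulerf_nth by simp
qed

lemma eulerf_double_cong:
  assumes "m \<ge> 1"
  shows "fps_cong 4 N (eulerf m ^ 2 * (1 + 2 * squares_fps m)) (eulerf (2 * m))"
proof -
  have "fps_cong 0 N (eulerf m ^ 2) (euler_partial N m ^ 2)"
    using eulerf_cong_euler_partial[OF assms] by (rule fps_cong_power) simp_all
  then have "fps_cong 4 N (eulerf m ^ 2 * (1 + 2 * squares_fps m))
                          (euler_partial N m ^ 2 * (1 + 2 * squares_fps m))"
    by (rule fps_cong_mod_0[OF fps_cong_mult_right]) (simp_all add: fps_integral_add fps_integral_mult)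
  also have "fps_cong 4 N \<dots> (euler_partial N (2 * m))"
    using assms by (rule euler_partial_double_cong)
  also have "fps_cong 4 N \<dots> (eulerf (2 * m))"
    using assms by (intro fps_cong_mod_0[OF fps_cong_sym[OF eulerf_cong_euler_partial]]) simp
  finally show ?thesis .
qed

lemma overcubic_gf_cong:
  assumes "c \<ge> 1"
  shows "fps_cong 4 N (overcubic_gf c) (1 + 2 * (squares_fps 1 + of_nat (c - 1) * squares_fps 2))"
proof -
  define D where "D = eulerf 1 ^ 2 * eulerf 2 ^ (2 * c)"
  define H :: "rat fps" where "H = 1 + 2 * (squares_fps 1 + of_nat (c - 1) * squares_fps 2)"
  define E :: "rat fps" where "E = (1 + 2 * squares_fps 1) * (1 + 2 * squares_fps 2) ^ (c - 1)"
  have D_integral: "fps_integral D"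
    unfolding D_def by (auto intro!: fps_integral_intros)
  have D_0: "D $ 0 = 1"
    unfolding D_def by (simp add: fps_nth_power_0 eulerf_nth euler_partial_def)
  have "fps_cong 4 N E ((1 + 2 * squares_fps 1) * (1 + 2 * (of_nat (c - 1) * squares_fps 2)))"
    unfolding E_def using fps_cong_4_power_one_plus_2[of "squares_fps 2" N "c - 1"]
    by (intro fps_cong_mult_left) (auto simp: mult.assoc intro!: fps_integral_add fps_integral_mult)
  also have "fps_cong 4 N \<dots> H"
    unfolding H_def by (intro fps_cong_4_mult_one_plus_2 fps_integral_mult) auto
  finally have "fps_cong 4 N (D * H) (D * E)"
    by (intro fps_cong_mult_left[OF fps_cong_sym] D_integral)
  also have "D * E = (eulerf 1 ^ 2 * (1 + 2 * squares_fps 1)) * eulerf 2 ^ 2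
                     * (eulerf 2 ^ 2 * (1 + 2 * squares_fps 2)) ^ (c - 1)"
  proof -
    have "2 * c = 2 + 2 * (c - 1)"
      using assms by simp
    then have "eulerf 2 ^ (2 * c) = eulerf 2 ^ 2 * (eulerf 2 ^ 2) ^ (c - 1)"
      by (simp only: power_add power_mult)
    then show ?thesis
      unfolding D_def E_def power_mult_distrib by (simp only: mult_ac)
  qed
  also have "fps_cong 4 N \<dots> (eulerf 2 * eulerf 2 ^ 2 * eulerf 4 ^ (c - 1))"
    using eulerf_double_cong[of 1 N] eulerf_double_cong[of 2 N]
    by (intro fps_cong_mult fps_cong_power) (auto intro!: fps_integral_intros)
  also have "\<dots> = D * overcubic_gf c"
    using inverse_mult_eq_1'[of D] D_0
    unfolding overcubic_gf_def D_def[symmetric]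
    by (simp add: power3_eq_cube power2_eq_square algebra_simps)
  finally have "fps_cong 4 N (inverse D * (D * H)) (inverse D * (D * overcubic_gf c))"
    by (rule fps_cong_mult_left) (rule fps_integral_inverse[OF D_integral D_0])
  moreover have "inverse D * D = 1"
    using D_0 by (intro inverse_mult_eq_1) simp
  ultimately show ?thesis
    unfolding H_def by (simp add: mult.assoc[symmetric] fps_cong_sym)
qed

lemma square_neq_double_square:
  fixes i j :: nat
  assumes "j^2 = 2 * i^2"
  shows "j = 0"
proof (rule ccontr)
  assume "j \<noteq> 0"
  with assms have "i \<noteq> 0"
    by (cases "i = 0") auto
  have "2 * multiplicity 2 j = multiplicity 2 (j^2)"
    using \<open>j \<noteq> 0\<close> by (simp add: prime_elem_multiplicity_power_distrib)
  also have "\<dots> = multiplicity 2 (2 * i^2)"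
    using assms by simp
  also have "\<dots> = Suc (2 * multiplicity 2 i)"
    using \<open>i \<noteq> 0\<close> by (simp add: multiplicity_times_same prime_elem_multiplicity_power_distrib)
  finally show False
    by presburger
qed

lemma int_eq_mult_square_iff: "(\<exists>k::int. int n = int m * k^2) \<longleftrightarrow> (\<exists>j. n = m * j^2)"
proof
  assume "\<exists>k::int. int n = int m * k^2"
  then obtain k :: int where "int n = int m * k^2" ..
  moreover have "int (m * (nat \<bar>k\<bar>)^2) = int m * k^2"
    by simp
  ultimately have "n = m * (nat \<bar>k\<bar>)^2"
    by (simp only: of_nat_eq_iff flip: \<open>int n = int m * k^2\<close>)
  then show "\<exists>j. n = m * j^2" ..
next
  assume "\<exists>j. n = m * j^2"
  then show "\<exists>k::int. int n = int m * k^2"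
    by (metis of_nat_mult of_nat_power)
qed

lemma abar_mod_4:
  assumes "c \<ge> 1" "n \<ge> 1"
  obtains t :: int
  where "abar c n = 2 * of_bool (\<exists>j. n = j^2) + 2 * of_nat (c - 1) * of_bool (\<exists>j. n = 2 * j^2) + 4 * of_int t"
proof -
  have "fps_cong 4 n (overcubic_gf c) (1 + 2 * (squares_fps 1 + of_nat (c - 1) * squares_fps 2))"
    using assms(1) by (rule overcubic_gf_cong)
  then have "int_multiple 4 (overcubic_gf c $ n - (1 + 2 * (squares_fps 1 + of_nat (c - 1) * squares_fps 2)) $ n)"
    unfolding fps_cong_def by blast
  moreover have "(1 + 2 * (squares_fps 1 + of_nat (c - 1) * squares_fps 2) :: rat fps) $ n
      = 2 * of_bool (\<exists>j. n = j^2) + 2 * of_nat (c - 1) * of_bool (\<exists>j. n = 2 * j^2)"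
    using assms(2) by (simp add: squares_fps_def numeral_fps_const flip: fps_of_nat)
  ultimately show ?thesis
    using that unfolding abar_def int_multiple_def by (auto elim!: Ints_cases simp: algebra_simps)
qed

theorem theorem1p1:
  fixes c n :: nat
  assumes "c \<ge> 1" and "n \<ge> 1"
  shows "\<exists>t::int. abar c n =
           of_int ((if \<exists>k::int. int n = k^2 then 2
                    else if \<exists>k::int. int n = 2 * k^2 then 2 * (int c + 1)
                    else 0) + 4 * t)"
proof -
  define sq where "sq \<longleftrightarrow> (\<exists>j. n = j^2)"
  define dsq where "dsq \<longleftrightarrow> (\<exists>j. n = 2 * j^2)"
  have "(\<exists>k::int. int n = k^2) \<longleftrightarrow> sq" "(\<exists>k::int. int n = 2 * k^2) \<longleftrightarrow> dsq"
    using int_eq_mult_square_iff[of n 1] int_eq_mult_square_iff[of n 2] by (simp_all add: sq_def dsq_def)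
  moreover have "\<not> (sq \<and> dsq)"
    using square_neq_double_square assms(2) unfolding sq_def dsq_def by force
  moreover obtain t :: int where t: "abar c n = 2 * of_bool sq + 2 * of_nat (c - 1) * of_bool dsq + 4 * of_int t"
    using abar_mod_4[OF assms] unfolding sq_def dsq_def .
  moreover have "of_nat (c - 1) = (of_int (int c + 1) - 2 :: rat)"
    using assms(1) by (simp add: of_nat_diff)
  ultimately show ?thesis
    by (cases sq; cases dsq) (auto intro: exI[of _ t] exI[of _ "t - 1"] simp: algebra_simps)
qed

end
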